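(* Let $q$ be a prime power, $m\ge2$, and $\Phi(x)=\sum_{i=0}^{2m}c_ix^{q^i}\in\mathbb{F}_q[x]$ with $c_{2m}=1$, $c_i=-c_{2m-i}$ for $0\le i\le m$, and $c_m=0$. Then there is a monic polynomial $f\in\mathbb{F}_q[x]$ of degree $q^{m-1}(q^m+1)$ such that $f^q-f=x^{q^m}\Phi(x)$. This $f$ is unique if we require $f(0)=0$. The powers of $x$ occurring in $f$ with nonzero coefficient all have the form $x^{q^i+q^j}$ for non-negative integers $i,j$. *)

theory Defs
  imports "HOL-Computational_Algebra.Polynomial" "HOL-Library.Cardinality"
begin

definition Phi :: "nat \<Rightarrow> nat \<Rightarrow> (nat \<Rightarrow> 'a::{finite,field}) \<Rightarrow> 'a poly" where
  "Phi q m c = (\<Sum>i\<le>2*m. monom (c i) (q ^ i))"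

end

theory Submission
  imports Defs
begin

(* Over F_q the Frobenius p |-> p^q is additive on polynomials and sends a x^e to a x^(q e), so
   the Artin-Schreier map g |-> g^q - g is additive, its kernel consists of the constants (which
   gives uniqueness under f(0) = 0), and it maps sum_{j<k} a x^(q^j e) to a x^(q^k e) - a x^e.
   By the antisymmetry of the c_i, x^(q^m) Phi is sum_{i<m} c_i (x^(q^i+q^m) - x^(q^(2m-i)+q^m)),
   and q^(m-i) (q^i+q^m) = q^(2m-i)+q^m, so f = - sum_{i<m} sum_{j<m-i} c_i x^(q^j (q^i+q^m))
   is a preimage.  Its largest exponent q^(m-1) (q^m+1) occurs only for i = 0, j = m-1, with
   coefficient -c_0 = c_(2m) = 1. *)

lemma card_UNIV_field_ge_2: "CARD('a::{finite,field}) \<ge> 2"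
proof -
  have "card {0, 1::'a} \<le> CARD('a)"
    by (rule card_mono) auto
  thus ?thesis by simp
qed

lemma finite_field_power_card:
  fixes x :: "'a::{finite,field}"
  shows "x ^ CARD('a) = x"
proof (cases "x = 0")
  case True
  thus ?thesis using card_UNIV_field_ge_2[where 'a='a] by (simp add: power_0_left)
next
  case False
  define U where "U = UNIV - {0::'a}"
  have "(\<Prod>y\<in>U. x * y) = \<Prod>U"
    by (rule prod.reindex_bij_witness[of _ "\<lambda>y. y / x" "(*) x"]) (use False in \<open>auto simp: U_def\<close>)
  hence "x ^ card U * \<Prod>U = 1 * \<Prod>U"
    by (simp add: prod.distrib)
  moreover have "\<Prod>U \<noteq> 0"
    by (simp add: U_def)
  ultimately have "x ^ card U = 1"
    by (rule mult_right_cancel[THEN iffD1, rotated])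
  moreover have "CARD('a) = Suc (card U)"
    by (simp add: U_def card_Diff_singleton card_UNIV_field_ge_2)
  ultimately show ?thesis by simp
qed

text \<open>The polynomial \<open>(X + 1)^q - X^q - 1\<close> has degree below \<open>q\<close> but vanishes on
  all \<open>q\<close> elements of the field, so it is zero.\<close>
lemma finite_field_card_choose_eq_0:
  assumes "0 < k" "k < CARD('a::{finite,field})"
  shows "of_nat (CARD('a) choose k) = (0::'a)"
proof -
  let ?q = "CARD('a)"
  define P :: "'a poly" where "P = (\<Sum>j\<in>{1..<?q}. monom (of_nat (?q choose j)) j)"
  have binomial: "(a + 1) ^ ?q = 1 + (a ^ ?q + poly P a)" for a :: 'a
  proof -
    have "{..?q} = insert 0 (insert ?q {1..<?q})"
      using card_UNIV_field_ge_2[where 'a='a] by auto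
    thus ?thesis
      using card_UNIV_field_ge_2[where 'a='a]
      by (simp add: binomial_ring P_def poly_sum poly_monom)
  qed
  have "card {a. poly P a = 0} = ?q"
    using binomial by (simp add: finite_field_power_card)
  moreover have "degree P \<le> ?q - 1"
    unfolding P_def by (intro degree_sum_le) (auto intro: order.trans[OF degree_monom_le])
  hence "degree P < ?q"
    using card_UNIV_field_ge_2[where 'a='a] by linarith
  ultimately have "P = 0"
    using card_poly_roots_bound[of P] by fastforce
  hence "coeff P k = 0" by simp
  thus ?thesis
    using assms by (simp add: P_def coeff_sum coeff_monom)
qed

lemma poly_add_power_card:
  fixes p r :: "'a::{finite,field} poly"
  shows "(p + r) ^ CARD('a) = p ^ CARD('a) + r ^ CARD('a)"
proof -
  let ?q = "CARD('a)"
  have "(p + r) ^ ?q = (\<Sum>k\<le>?q. of_nat (?q choose k) * p ^ k * r ^ (?q - k))"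
    by (rule binomial_ring)
  also have "\<dots> = (\<Sum>k\<in>{0, ?q}. of_nat (?q choose k) * p ^ k * r ^ (?q - k))"
  proof (rule sum.mono_neutral_right)
    show "\<forall>k\<in>{..?q} - {0, ?q}. of_nat (?q choose k) * p ^ k * r ^ (?q - k) = 0"
      by (auto simp: of_nat_poly finite_field_card_choose_eq_0)
  qed auto
  finally show ?thesis
    using card_UNIV_field_ge_2[where 'a='a] by (simp add: add.commute)
qed

lemma poly_diff_power_card:
  fixes p r :: "'a::{finite,field} poly"
  shows "(p - r) ^ CARD('a) = p ^ CARD('a) - r ^ CARD('a)"
  using poly_add_power_card[of "p - r" r] by (simp add: eq_diff_eq)

lemma poly_sum_power_card:
  fixes p :: "'b \<Rightarrow> 'a::{finite,field} poly"
  shows "(\<Sum>i\<in>A. p i) ^ CARD('a) = (\<Sum>i\<in>A. p i ^ CARD('a))"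
  by (induction A rule: infinite_finite_induct)
     (simp_all add: poly_add_power_card power_0_left)

lemma monom_power_card:
  fixes a :: "'a::{finite,field}"
  shows "monom a n ^ CARD('a) = monom a (CARD('a) * n)"
  by (simp add: monom_power finite_field_power_card mult.commute)

lemma monom_sum_power_card_telescope:
  fixes a :: "'a::{finite,field}"
  defines "q \<equiv> CARD('a)"
  shows "(\<Sum>j<k. monom a (q ^ j * e)) ^ q - (\<Sum>j<k. monom a (q ^ j * e))
           = monom a (q ^ k * e) - monom a e"
proof -
  have "(\<Sum>j<k. monom a (q ^ j * e)) ^ q = (\<Sum>j<k. monom a (q ^ Suc j * e))"
    by (simp add: q_def poly_sum_power_card monom_power_card mult.assoc)
  hence "(\<Sum>j<k. monom a (q ^ j * e)) ^ q - (\<Sum>j<k. monom a (q ^ j * e))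
           = (\<Sum>j<k. monom a (q ^ Suc j * e) - monom a (q ^ j * e))"
    by (simp add: sum_subtractf)
  also have "\<dots> = monom a (q ^ k * e) - monom a e"
    using sum_lessThan_telescope[where f = "\<lambda>j. monom a (q ^ j * e)"] by simp
  finally show ?thesis .
qed

lemma poly_power_eq_self_imp_degree_0:
  fixes p :: "'a::idom poly"
  assumes "p ^ n = p" "n \<noteq> 1"
  shows "degree p = 0"
proof (cases "p = 0")
  case False
  hence "n * degree p = degree p"
    using assms(1) by (metis degree_power_eq)
  thus ?thesis using assms(2) by simp
qed simp

lemma artin_schreier_inj:
  fixes p r :: "'a::{finite,field} poly"
  assumes "p ^ CARD('a) - p = r ^ CARD('a) - r" "poly p 0 = poly r 0"
  shows "p = r"
proof -
  have "(p - r) ^ CARD('a) = p - r"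
    using assms(1) by (simp add: poly_diff_power_card algebra_simps)
  hence "degree (p - r) = 0"
    using card_UNIV_field_ge_2[where 'a='a] by (intro poly_power_eq_self_imp_degree_0) auto
  then obtain a where "p - r = [:a:]"
    by (rule degree_eq_zeroE)
  moreover have "poly (p - r) 0 = 0"
    using assms(2) by simp
  ultimately show ?thesis by simp
qed

lemma monom_mult_Phi_antisymmetric:
  assumes c_anti: "\<And>i. i \<le> m \<Longrightarrow> c i = - c (2*m - i)"
    and c_mid: "c m = 0"
  shows "monom 1 (q ^ m) * Phi q m c
           = (\<Sum>i<m. monom (c i) (q ^ i + q ^ m) - monom (c i) (q ^ (2*m - i) + q ^ m))"
proof -
  have "monom 1 (q ^ m) * Phi q m c = (\<Sum>i\<le>2*m. monom (c i) (q ^ i + q ^ m))"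
    by (simp add: Phi_def sum_distrib_left mult_monom add.commute)
  also have "{..2*m} = {..<m} \<union> {m} \<union> {m<..2*m}"
    by auto
  also have "(\<Sum>i\<in>{..<m} \<union> {m} \<union> {m<..2*m}. monom (c i) (q ^ i + q ^ m))
      = (\<Sum>i<m. monom (c i) (q ^ i + q ^ m)) + (\<Sum>i\<in>{m<..2*m}. monom (c i) (q ^ i + q ^ m))"
    using c_mid by (subst sum.union_disjoint; auto)+
  also have "(\<Sum>i\<in>{m<..2*m}. monom (c i) (q ^ i + q ^ m))
      = (\<Sum>i<m. monom (c (2*m - i)) (q ^ (2*m - i) + q ^ m))"
    by (rule sum.reindex_bij_witness[of _ "\<lambda>i. 2*m - i" "\<lambda>i. 2*m - i"]) auto
  also have "\<dots> = - (\<Sum>i<m. monom (c i) (q ^ (2*m - i) + q ^ m))"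
    using c_anti by (simp add: sum_negf flip: minus_monom)
  finally show ?thesis
    by (simp add: sum_subtractf)
qed

definition artin_schreier_preimage :: "nat \<Rightarrow> nat \<Rightarrow> (nat \<Rightarrow> 'a::{finite,field}) \<Rightarrow> 'a poly" where
  "artin_schreier_preimage q m c = (\<Sum>i<m. \<Sum>j<m-i. monom (- c i) (q ^ j * (q ^ i + q ^ m)))"

lemma artin_schreier_preimage_eq:
  fixes c :: "nat \<Rightarrow> 'a::{finite,field}"
  assumes q: "q = CARD('a)"
    and c_anti: "\<And>i. i \<le> m \<Longrightarrow> c i = - c (2*m - i)"
    and c_mid: "c m = 0"
  defines "f \<equiv> artin_schreier_preimage q m c"
  shows "f ^ q - f = monom 1 (q ^ m) * Phi q m c"
proof -
  have "f ^ q - f = (\<Sum>i<m. (\<Sum>j<m-i. monom (- c i) (q ^ j * (q ^ i + q ^ m))) ^ q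
                             - (\<Sum>j<m-i. monom (- c i) (q ^ j * (q ^ i + q ^ m))))"
    by (simp add: f_def artin_schreier_preimage_def q poly_sum_power_card sum_subtractf)
  also have "\<dots> = (\<Sum>i<m. monom (- c i) (q ^ (m-i) * (q ^ i + q ^ m)) - monom (- c i) (q ^ i + q ^ m))"
    by (simp add: q monom_sum_power_card_telescope)
  also have "\<dots> = (\<Sum>i<m. monom (c i) (q ^ i + q ^ m) - monom (c i) (q ^ (2*m - i) + q ^ m))"
  proof (rule sum.cong)
    fix i assume "i \<in> {..<m}"
    hence "m - i + i = m" "m - i + m = 2*m - i"
      by auto
    hence "q ^ (m-i) * (q ^ i + q ^ m) = q ^ (2*m - i) + q ^ m"
      by (metis add.commute distrib_left power_add)
    thus "monom (- c i) (q ^ (m-i) * (q ^ i + q ^ m)) - monom (- c i) (q ^ i + q ^ m)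
            = monom (c i) (q ^ i + q ^ m) - monom (c i) (q ^ (2*m - i) + q ^ m)"
      by (simp flip: minus_monom)
  qed simp
  also have "\<dots> = monom 1 (q ^ m) * Phi q m c"
    using c_anti c_mid by (rule monom_mult_Phi_antisymmetric[symmetric])
  finally show ?thesis .
qed

lemma coeff_artin_schreier_preimage:
  "coeff (artin_schreier_preimage q m c) k
     = (\<Sum>i<m. \<Sum>j<m-i. if q ^ j * (q ^ i + q ^ m) = k then - c i else 0)"
  by (simp add: artin_schreier_preimage_def coeff_sum coeff_monom)

lemma artin_schreier_preimage_exponent_bound:
  fixes q :: nat
  assumes "q \<ge> 2" "i < m" "j < m - i"
  shows "q ^ j * (q ^ i + q ^ m) < q ^ (m - 1) * (q ^ m + 1) \<or> (i = 0 \<and> j = m - 1)"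
proof (cases "j = m - 1")
  case False
  hence "j + i \<le> m - 1" "j < m - 1"
    using assms by auto
  hence "q ^ (j + i) \<le> q ^ (m - 1)" "q ^ j < q ^ (m - 1)"
    using assms(1) by (auto intro: power_increasing power_strict_increasing)
  hence "q ^ j * q ^ i + q ^ j * q ^ m < q ^ (m - 1) + q ^ (m - 1) * q ^ m"
    using assms(1) by (intro add_le_less_mono) (simp_all add: power_add)
  thus ?thesis
    by (simp add: algebra_simps)
qed (use assms in auto)

lemma degree_artin_schreier_preimage:
  fixes q :: nat
  assumes "q \<ge> 2" "m \<ge> 1" "c 0 \<noteq> 0"
  defines "f \<equiv> artin_schreier_preimage q m c"
  shows "degree f = q ^ (m - 1) * (q ^ m + 1)" and "lead_coeff f = - c 0"
proof -
  let ?N = "q ^ (m - 1) * (q ^ m + 1)"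
  have exponent: "q ^ j * (q ^ i + q ^ m) \<le> ?N \<and> (q ^ j * (q ^ i + q ^ m) = ?N \<longleftrightarrow> i = 0 \<and> j = m - 1)"
    if "i < m" "j < m - i" for i j
    using artin_schreier_preimage_exponent_bound[OF assms(1) that] assms(2) by (auto simp: mult_2)
  have "coeff f k = 0" if "k > ?N" for k
    unfolding f_def coeff_artin_schreier_preimage
    by (intro sum.neutral ballI) (use exponent that in fastforce)
  moreover have top: "coeff f ?N = - c 0"
  proof -
    have "coeff f ?N = (\<Sum>i<m. \<Sum>j<m-i. if i = 0 \<and> j = m - 1 then - c i else 0)"
      unfolding f_def coeff_artin_schreier_preimage
      by (intro sum.cong refl) (use exponent in auto)
    also have "\<dots> = (\<Sum>i<m. if i = 0 then - c 0 else 0)"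
      using assms(2) by (intro sum.cong refl) auto
    also have "\<dots> = - c 0"
      using assms(2) by simp
    finally show ?thesis .
  qed
  ultimately show "degree f = ?N"
    using assms(3) by (intro antisym degree_le le_degree) auto
  thus "lead_coeff f = - c 0"
    using top by simp
qed

lemma poly_artin_schreier_preimage_0:
  "q > 0 \<Longrightarrow> poly (artin_schreier_preimage q m c) 0 = 0"
  by (simp add: poly_0_coeff_0 coeff_artin_schreier_preimage)

lemma coeff_artin_schreier_preimage_nonzero:
  assumes "coeff (artin_schreier_preimage q m c) k \<noteq> 0"
  shows "\<exists>a b. k = q ^ a + q ^ b"
proof (rule ccontr)
  assume "\<nexists>a b. k = q ^ a + q ^ b"
  hence "q ^ j * (q ^ i + q ^ m) \<noteq> k" for i j
    by (metis distrib_left power_add)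
  hence "coeff (artin_schreier_preimage q m c) k = 0"
    by (simp add: coeff_artin_schreier_preimage)
  with assms show False ..
qed

theorem lemma4p5:
  fixes c :: "nat \<Rightarrow> 'a::{finite,field}" and m q :: nat
  assumes q: "q = CARD('a)"
    and m: "m \<ge> 2"
    and c_top: "c (2*m) = 1"
    and c_anti: "\<And>i. i \<le> m \<Longrightarrow> c i = - c (2*m - i)"
    and c_mid: "c m = 0"
  shows "\<exists>f :: 'a poly.
           lead_coeff f = 1
         \<and> degree f = q ^ (m - 1) * (q ^ m + 1)
         \<and> f ^ q - f = monom 1 (q ^ m) * Phi q m c
         \<and> poly f 0 = 0
         \<and> (\<forall>g :: 'a poly. g ^ q - g = monom 1 (q ^ m) * Phi q m c \<and> poly g 0 = 0 \<longrightarrow> g = f)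
         \<and> (\<forall>k. coeff f k \<noteq> 0 \<longrightarrow> (\<exists>i j. k = q ^ i + q ^ j))"
proof -
  define f where "f = artin_schreier_preimage q m c"
  have q2: "q \<ge> 2"
    using q card_UNIV_field_ge_2[where 'a='a] by simp
  have c0: "c 0 = - 1"
    using c_anti[of 0] c_top by simp
  have eq: "f ^ q - f = monom 1 (q ^ m) * Phi q m c"
    unfolding f_def using q c_anti c_mid by (rule artin_schreier_preimage_eq)
  have f0: "poly f 0 = 0"
    using q2 by (simp add: f_def poly_artin_schreier_preimage_0)
  show ?thesis
  proof (intro exI[of _ f] conjI allI impI)
    show "lead_coeff f = 1" "degree f = q ^ (m - 1) * (q ^ m + 1)"
      using degree_artin_schreier_preimage[OF q2, of m c] m c0 by (simp_all add: f_def)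
    show "g = f" if "g ^ q - g = monom 1 (q ^ m) * Phi q m c \<and> poly g 0 = 0" for g
    proof (rule artin_schreier_inj)
      show "g ^ CARD('a) - g = f ^ CARD('a) - f" "poly g 0 = poly f 0"
        using that eq f0 q by simp_all
    qed
    show "\<exists>i j. k = q ^ i + q ^ j" if "coeff f k \<noteq> 0" for k
      using that unfolding f_def by (rule coeff_artin_schreier_preimage_nonzero)
  qed (fact eq f0)+
qed

end
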